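(* In the setting described in the context (with $L=[0,1]$), let $q\in\{1,\dots,n\}$ and assume there exists $A\subseteq\mathcal C$ with $|A|=q$ and $\eta_q(A)=1$. Define $\mu^*:2^{\mathcal C}\to[0,1]$ by $\mu^*(\emptyset)=0$, $\mu^*(X)=\eta_q(X)$ if $0<|X|\le q$, and $\mu^*(X)=\max_{\emptyset\neq Y\subsetneq X,\ |Y|\le q}\eta_q(Y)$ if $|X|>q$. Then $\mu^*$ is a $q$-maxitive capacity and $\max_{1\le k\le N}|S_{\mu^*}(x^{(k)})-\alpha^{(k)}|=\Delta_q$.
   Context: Let $\mathcal C=\{1,\dots,n\}$ and $L=[0,1]$. A capacity is a map $\mu:2^{\mathcal C}\to[0,1]$ with $\mu(\emptyset)=0$, $\mu(\mathcal C)=1$, monotone for inclusion; it is $q$-maxitive if for all $X$ with $|X|>q$, $\mu(X)=\max_{Y\subsetneq X,\ |Y|\le q}\mu(Y)$. Sugeno integral: $S_\mu(x)=\max_{A\subseteq\mathcal C}\min(\min_{i\in A}x_i,\mu(A))$ with $\min_{i\in\emptyset}x_i=1$. Training data: $N$ pairs $(x^{(k)},\alpha^{(k)})$, $x^{(k)}\in[0,1]^n$, $\alpha^{(k)}\in[0,1]$. For nonempty $A$, $m_{k,A}=\min_{i\in A}x^{(k)}_i$. Write $t^+=\max(t,0)$. For $1\le i\le N$ and $0<|A|\le q$, let $\sigma_G(\alpha^{(i)},m_{l,A},\alpha^{(l)})=\min\big(\tfrac{(\alpha^{(i)}-\alpha^{(l)})^+}{2},(m_{l,A}-\alpha^{(l)})^+\big)$,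 $\delta_{i,A}=\max\big((\alpha^{(i)}-m_{i,A})^+,\max_{1\le l\le N}\sigma_G(\alpha^{(i)},m_{l,A},\alpha^{(l)})\big)$, $\delta_i=\min_{0<|A|\le q}\delta_{i,A}$, and $\Delta_q=\max_{1\le i\le N}\delta_i$. For $0<|A|\le q$, $\eta_q(A)=\min_{1\le k\le N}\big(m_{k,A}\to_G\min(\alpha^{(k)}+\Delta_q,1)\big)$, where $a\to_G b=1$ if $a\le b$ and $a\to_G b=b$ otherwise. *)

theory Defs
  imports Complex_Main
begin

text \<open>Criteria set C = {1..n}; capacities are functions on sets of naturals,
  only their values on subsets of {1..n} matter.\<close>

definition crit :: "nat \<Rightarrow> nat set" where
  "crit n = {1..n}"

definition pos :: "real \<Rightarrow> real" where
  "pos t = max t 0"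

definition capacity :: "nat \<Rightarrow> (nat set \<Rightarrow> real) \<Rightarrow> bool" where
  "capacity n \<mu> \<longleftrightarrow>
     \<mu> {} = 0 \<and> \<mu> (crit n) = 1 \<and>
     (\<forall>X. X \<subseteq> crit n \<longrightarrow> 0 \<le> \<mu> X \<and> \<mu> X \<le> 1) \<and>
     (\<forall>X Y. X \<subseteq> Y \<longrightarrow> Y \<subseteq> crit n \<longrightarrow> \<mu> X \<le> \<mu> Y)"

definition q_maxitive :: "nat \<Rightarrow> nat \<Rightarrow> (nat set \<Rightarrow> real) \<Rightarrow> bool" where
  "q_maxitive n q \<mu> \<longleftrightarrow>
     (\<forall>X. X \<subseteq> crit n \<longrightarrow> card X > q \<longrightarrow>
        \<mu> X = Max {\<mu> Y | Y. Y \<subset> X \<and> card Y \<le> q})"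

definition minx :: "(nat \<Rightarrow> real) \<Rightarrow> nat set \<Rightarrow> real" where
  "minx x A = (if A = {} then 1 else Min (x ` A))"

definition sugeno :: "nat \<Rightarrow> (nat set \<Rightarrow> real) \<Rightarrow> (nat \<Rightarrow> real) \<Rightarrow> real" where
  "sugeno n \<mu> x = Max {min (minx x A) (\<mu> A) | A. A \<subseteq> crit n}"

text \<open>Training data: x k i is the i-th component of x^(k), alpha k is alpha^(k), k in {1..N}.\<close>

definition mkA :: "(nat \<Rightarrow> nat \<Rightarrow> real) \<Rightarrow> nat \<Rightarrow> nat set \<Rightarrow> real" where
  "mkA x k A = Min (x k ` A)"

definition sigmaG :: "real \<Rightarrow> real \<Rightarrow> real \<Rightarrow> real" where
  "sigmaG ai m al = min (pos (ai - al) / 2) (pos (m - al))"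

definition deltaA :: "nat \<Rightarrow> (nat \<Rightarrow> nat \<Rightarrow> real) \<Rightarrow> (nat \<Rightarrow> real) \<Rightarrow> nat \<Rightarrow> nat set \<Rightarrow> real" where
  "deltaA N x alpha i A =
     max (pos (alpha i - mkA x i A))
         (Max ((\<lambda>l. sigmaG (alpha i) (mkA x l A) (alpha l)) ` {1..N}))"

definition qsets :: "nat \<Rightarrow> nat \<Rightarrow> nat set set" where
  "qsets n q = {A. A \<subseteq> crit n \<and> 0 < card A \<and> card A \<le> q}"

definition delta :: "nat \<Rightarrow> nat \<Rightarrow> nat \<Rightarrow> (nat \<Rightarrow> nat \<Rightarrow> real) \<Rightarrow> (nat \<Rightarrow> real) \<Rightarrow> nat \<Rightarrow> real" where
  "delta n q N x alpha i = Min (deltaA N x alpha i ` qsets n q)"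

definition Delta :: "nat \<Rightarrow> nat \<Rightarrow> nat \<Rightarrow> (nat \<Rightarrow> nat \<Rightarrow> real) \<Rightarrow> (nat \<Rightarrow> real) \<Rightarrow> real" where
  "Delta n q N x alpha = Max (delta n q N x alpha ` {1..N})"

definition impG :: "real \<Rightarrow> real \<Rightarrow> real" where
  "impG a b = (if a \<le> b then 1 else b)"

definition eta :: "nat \<Rightarrow> nat \<Rightarrow> nat \<Rightarrow> (nat \<Rightarrow> nat \<Rightarrow> real) \<Rightarrow> (nat \<Rightarrow> real) \<Rightarrow> nat set \<Rightarrow> real" where
  "eta n q N x alpha A =
     Min ((\<lambda>k. impG (mkA x k A) (min (alpha k + Delta n q N x alpha) 1)) ` {1..N})"

definition mustar :: "nat \<Rightarrow> nat \<Rightarrow> nat \<Rightarrow> (nat \<Rightarrow> nat \<Rightarrow> real) \<Rightarrow> (nat \<Rightarrow> real) \<Rightarrow> nat set \<Rightarrow> real" where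
  "mustar n q N x alpha X =
     (if X = {} then 0
      else if card X \<le> q then eta n q N x alpha X
      else Max {eta n q N x alpha Y | Y. Y \<noteq> {} \<and> Y \<subset> X \<and> card Y \<le> q})"

end

theory Submission
  imports Defs
begin

(* A q-maxitive capacity is determined by its values on the sets with at most q elements, and
   its Sugeno integral only sees those sets: S(x) = max over 0 < |A| <= q of min(m_A, mu(A)).
   If a set function nu, used in this reduced Sugeno integral, fits the data with error eps,
   then for each i the set A realising S(x^(i)) gives delta_{i,A} <= eps, so Delta_q <= eps.
   Conversely, eta_q(A) is the largest value keeping min(m_{k,A}, eta_q(A)) <= alpha^(k) + Delta_q
   for every k, and the set A realising delta_i shows that the reduced integral also reaches
   alpha^(i) - Delta_q.  So mu*, the q-maxitive extension of eta_q, has error exactly Delta_q;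
   the hypothesis eta_q(A) = 1 for some |A| = q is what makes mu*(C) = 1. *)

section \<open>The q-maxitive extension of a set function\<close>

definition small_subsets :: "nat \<Rightarrow> nat set \<Rightarrow> nat set set" where
  "small_subsets q X = {Y. Y \<noteq> {} \<and> Y \<subset> X \<and> card Y \<le> q}"

definition maxitive_ext :: "nat \<Rightarrow> (nat set \<Rightarrow> real) \<Rightarrow> nat set \<Rightarrow> real" where
  "maxitive_ext q \<eta> X =
     (if X = {} then 0 else if card X \<le> q then \<eta> X else Max (\<eta> ` small_subsets q X))"

lemma finite_crit [simp]: "finite (crit n)"
  by (simp add: crit_def)

lemma finite_qsets: "finite (qsets n q)"
proof -
  have "qsets n q \<subseteq> Pow (crit n)"
    by (auto simp: qsets_def)
  then show ?thesis
    by (rule finite_subset) simp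
qed

lemma qsets_nonempty: "1 \<le> q \<Longrightarrow> 1 \<le> n \<Longrightarrow> qsets n q \<noteq> {}"
proof -
  assume "1 \<le> q" "1 \<le> n"
  then have "{1} \<in> qsets n q"
    by (auto simp: qsets_def crit_def)
  then show ?thesis
    by blast
qed

lemma qsetsD: "B \<in> qsets n q \<Longrightarrow> B \<subseteq> crit n \<and> B \<noteq> {} \<and> card B \<le> q \<and> finite B"
  by (auto simp: qsets_def intro: finite_subset)

lemma finite_small_subsets: "finite X \<Longrightarrow> finite (small_subsets q X)"
  by (rule finite_subset[of _ "Pow X"]) (auto simp: small_subsets_def)

lemma small_subsets_nonempty:
  assumes "1 \<le> q" "q < card X"
  shows "small_subsets q X \<noteq> {}"
proof -
  obtain a where "a \<in> X"
    using assms by fastforce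
  moreover have "{a} \<noteq> X"
    using assms by auto
  ultimately have "{a} \<in> small_subsets q X"
    using assms(1) by (auto simp: small_subsets_def)
  then show ?thesis
    by blast
qed

lemma small_subset_in_qsets: "X \<subseteq> crit n \<Longrightarrow> Y \<in> small_subsets q X \<Longrightarrow> Y \<in> qsets n q"
  using finite_subset[of Y "crit n"] by (auto simp: small_subsets_def qsets_def card_gt_0_iff)

lemma maxitive_ext_empty [simp]: "maxitive_ext q \<eta> {} = 0"
  by (simp add: maxitive_ext_def)

lemma maxitive_ext_small: "X \<noteq> {} \<Longrightarrow> card X \<le> q \<Longrightarrow> maxitive_ext q \<eta> X = \<eta> X"
  by (simp add: maxitive_ext_def)

lemma maxitive_ext_large: "q < card X \<Longrightarrow> maxitive_ext q \<eta> X = Max (\<eta> ` small_subsets q X)"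
  by (auto simp: maxitive_ext_def)

lemma maxitive_ext_large_ge:
  assumes "q < card X" "Y \<in> small_subsets q X"
  shows "\<eta> Y \<le> maxitive_ext q \<eta> X"
proof -
  have "finite X"
    using assms(1) card.infinite by fastforce
  then show ?thesis
    using assms by (auto simp: maxitive_ext_large intro!: Max_ge finite_small_subsets)
qed

lemma maxitive_ext_value:
  assumes "1 \<le> q" "X \<subseteq> crit n" "X \<noteq> {}"
  shows "\<exists>B\<in>qsets n q. B \<subseteq> X \<and> maxitive_ext q \<eta> X = \<eta> B"
proof (cases "card X \<le> q")
  case True
  then have "X \<in> qsets n q"
    using assms finite_subset[of X "crit n"] by (auto simp: qsets_def card_gt_0_iff)
  then show ?thesis
    using True assms(3) by (intro bexI[of _ X]) (simp_all add: maxitive_ext_small)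
next
  case False
  have "finite X"
    using assms(2) by (rule finite_subset) simp
  then have "Max (\<eta> ` small_subsets q X) \<in> \<eta> ` small_subsets q X"
    using small_subsets_nonempty[OF assms(1)] False
    by (intro Max_in finite_imageI finite_small_subsets) auto
  then obtain Y where Y: "Y \<in> small_subsets q X" "maxitive_ext q \<eta> X = \<eta> Y"
    using False maxitive_ext_large[of q X \<eta>] by auto
  moreover have "Y \<subseteq> X"
    using Y(1) by (auto simp: small_subsets_def)
  ultimately show ?thesis
    using small_subset_in_qsets[OF assms(2) Y(1)] by blast
qed

lemma maxitive_ext_nonneg:
  assumes "1 \<le> q" "\<And>A. A \<in> qsets n q \<Longrightarrow> 0 \<le> \<eta> A" "X \<subseteq> crit n"
  shows "0 \<le> maxitive_ext q \<eta> X"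
proof (cases "X = {}")
  case False
  then obtain B where "B \<in> qsets n q" "maxitive_ext q \<eta> X = \<eta> B"
    using maxitive_ext_value[OF assms(1,3)] by blast
  then show ?thesis
    using assms(2)[of B] by simp
qed simp

lemma maxitive_ext_le_one:
  assumes "1 \<le> q" "\<And>A. A \<in> qsets n q \<Longrightarrow> \<eta> A \<le> 1" "X \<subseteq> crit n"
  shows "maxitive_ext q \<eta> X \<le> 1"
proof (cases "X = {}")
  case False
  then obtain B where "B \<in> qsets n q" "maxitive_ext q \<eta> X = \<eta> B"
    using maxitive_ext_value[OF assms(1,3)] by blast
  then show ?thesis
    using assms(2)[of B] by simp
qed simp

lemma maxitive_ext_mono:
  assumes "1 \<le> q" and nonneg: "\<And>A. A \<in> qsets n q \<Longrightarrow> 0 \<le> \<eta> A"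
    and mono: "\<And>A B. A \<in> qsets n q \<Longrightarrow> B \<in> qsets n q \<Longrightarrow> A \<subseteq> B \<Longrightarrow> \<eta> A \<le> \<eta> B"
    and XY: "X \<subseteq> Y" "Y \<subseteq> crit n"
  shows "maxitive_ext q \<eta> X \<le> maxitive_ext q \<eta> Y"
proof -
  have "finite Y"
    using XY(2) by (rule finite_subset) simp
  consider "X = {}" | "X \<noteq> {}" "card Y \<le> q" | "X \<noteq> {}" "card X \<le> q" "q < card Y"
    | "q < card X"
    by linarith
  then show ?thesis
  proof cases
    case 1
    then show ?thesis
      using maxitive_ext_nonneg[OF assms(1) nonneg XY(2)] by simp
  next
    case 2
    then have "Y \<noteq> {}"
      using XY(1) by blast
    have "card X \<le> card Y"
      using \<open>finite Y\<close> XY(1) by (rule card_mono)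
    then have "X \<in> qsets n q" "Y \<in> qsets n q"
      using 2 XY \<open>finite Y\<close> finite_subset[of X Y] by (auto simp: qsets_def card_gt_0_iff)
    then show ?thesis
      using 2 \<open>Y \<noteq> {}\<close> \<open>card X \<le> card Y\<close> XY(1) mono by (simp add: maxitive_ext_small)
  next
    case 3
    then have "X \<in> small_subsets q Y"
      using XY(1) by (auto simp: small_subsets_def)
    then show ?thesis
      using 3 maxitive_ext_large_ge by (simp add: maxitive_ext_small)
  next
    case 4
    then have "q < card Y"
      using card_mono[OF \<open>finite Y\<close> XY(1)] by linarith
    moreover have "small_subsets q X \<subseteq> small_subsets q Y"
      using XY(1) by (auto simp: small_subsets_def)
    moreover have "small_subsets q X \<noteq> {}"
      using assms(1) 4 by (rule small_subsets_nonempty)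
    ultimately show ?thesis
      using 4 \<open>finite Y\<close>
      by (simp add: maxitive_ext_large Max_mono image_mono finite_small_subsets)
  qed
qed

lemma maxitive_ext_top:
  assumes "1 \<le> q" "\<And>A. A \<in> qsets n q \<Longrightarrow> \<eta> A \<le> 1"
    and A: "A \<subseteq> crit n" "card A = q" "\<eta> A = 1"
  shows "maxitive_ext q \<eta> (crit n) = 1"
proof (cases "A = crit n")
  case True
  then have "crit n \<noteq> {}"
    using A assms(1) by auto
  then show ?thesis
    using True A maxitive_ext_small[of "crit n" q \<eta>] by simp
next
  case False
  then have "A \<subset> crit n"
    using A(1) by blast
  then have "q < card (crit n)"
    using psubset_card_mono[OF finite_crit] A(2) by blast
  moreover have "A \<in> small_subsets q (crit n)"
    using A \<open>A \<subset> crit n\<close> assms(1) by (auto simp: small_subsets_def)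
  ultimately have "\<eta> A \<le> maxitive_ext q \<eta> (crit n)"
    by (rule maxitive_ext_large_ge)
  moreover have "maxitive_ext q \<eta> (crit n) \<le> 1"
    using maxitive_ext_le_one[OF assms(1,2)] by simp
  ultimately show ?thesis
    using A(3) by linarith
qed

lemma capacity_maxitive_ext:
  assumes "1 \<le> q" and bounds: "\<And>A. A \<in> qsets n q \<Longrightarrow> 0 \<le> \<eta> A \<and> \<eta> A \<le> 1"
    and mono: "\<And>A B. A \<in> qsets n q \<Longrightarrow> B \<in> qsets n q \<Longrightarrow> A \<subseteq> B \<Longrightarrow> \<eta> A \<le> \<eta> B"
    and top: "\<exists>A. A \<subseteq> crit n \<and> card A = q \<and> \<eta> A = 1"
  shows "capacity n (maxitive_ext q \<eta>)"
  unfolding capacity_def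
proof (intro conjI allI impI)
  obtain A where "A \<subseteq> crit n" "card A = q" "\<eta> A = 1"
    using top by blast
  then show "maxitive_ext q \<eta> (crit n) = 1"
    using bounds by (intro maxitive_ext_top[OF assms(1)]) auto
  fix X
  assume X: "X \<subseteq> crit n"
  show "0 \<le> maxitive_ext q \<eta> X"
    using bounds by (intro maxitive_ext_nonneg[OF assms(1) _ X]) auto
  show "maxitive_ext q \<eta> X \<le> 1"
    using bounds by (intro maxitive_ext_le_one[OF assms(1) _ X]) auto
next
  fix X Y
  assume "X \<subseteq> Y" "Y \<subseteq> crit n"
  then show "maxitive_ext q \<eta> X \<le> maxitive_ext q \<eta> Y"
    using bounds by (intro maxitive_ext_mono[OF assms(1) _ mono]) auto
qed simp

lemma q_maxitive_maxitive_ext: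
  assumes "1 \<le> q" and nonneg: "\<And>A. A \<in> qsets n q \<Longrightarrow> 0 \<le> \<eta> A"
  shows "q_maxitive n q (maxitive_ext q \<eta>)"
  unfolding q_maxitive_def
proof (intro allI impI)
  fix X
  assume X: "X \<subseteq> crit n" "q < card X"
  let ?S = "\<eta> ` small_subsets q X"
  have "finite X"
    using X(2) card.infinite by fastforce
  have "{Y. Y \<subset> X \<and> card Y \<le> q} = insert {} (small_subsets q X)"
    using X(2) by (auto simp: small_subsets_def)
  moreover have "maxitive_ext q \<eta> ` small_subsets q X = ?S"
    by (rule image_cong[OF refl]) (simp add: small_subsets_def maxitive_ext_small)
  ultimately have subsets: "{maxitive_ext q \<eta> Y |Y. Y \<subset> X \<and> card Y \<le> q} = insert 0 ?S"
    by (simp add: setcompr_eq_image)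
  have "finite ?S" "?S \<noteq> {}"
    using \<open>finite X\<close> small_subsets_nonempty[OF assms(1) X(2)] by (simp_all add: finite_small_subsets)
  moreover have "0 \<le> Max ?S"
    using Max_in[OF calculation] X(1) nonneg small_subset_in_qsets by fastforce
  ultimately have "Max (insert 0 ?S) = Max ?S"
    by (simp add: max_def)
  then show "maxitive_ext q \<eta> X = Max {maxitive_ext q \<eta> Y |Y. Y \<subset> X \<and> card Y \<le> q}"
    using X(2) subsets by (simp add: maxitive_ext_large)
qed

section \<open>Sugeno integrals of q-maxitive extensions\<close>

definition sugeno_qsets :: "nat \<Rightarrow> nat \<Rightarrow> (nat set \<Rightarrow> real) \<Rightarrow> (nat \<Rightarrow> real) \<Rightarrow> real" where
  "sugeno_qsets n q \<nu> f = Max ((\<lambda>B. min (minx f B) (\<nu> B)) ` qsets n q)"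

lemma minx_empty [simp]: "minx f {} = 1"
  by (simp add: minx_def)

lemma minx_nonneg: "(\<And>i. i \<in> A \<Longrightarrow> 0 \<le> f i) \<Longrightarrow> finite A \<Longrightarrow> 0 \<le> minx f A"
  by (simp add: minx_def)

lemma minx_antimono: "B \<noteq> {} \<Longrightarrow> B \<subseteq> A \<Longrightarrow> finite A \<Longrightarrow> minx f A \<le> minx f B"
  by (auto simp: minx_def intro: Min_antimono)

lemma sugeno_term_maxitive_ext_le_qsets:
  assumes "1 \<le> q" "1 \<le> n" and f: "\<And>i. i \<in> crit n \<Longrightarrow> 0 \<le> f i"
    and nonneg: "\<And>A. A \<in> qsets n q \<Longrightarrow> 0 \<le> \<eta> A" and A: "A \<subseteq> crit n"
  shows "\<exists>B\<in>qsets n q. min (minx f A) (maxitive_ext q \<eta> A) \<le> min (minx f B) (\<eta> B)"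
proof (cases "A = {}")
  case True
  obtain B where "B \<in> qsets n q"
    using qsets_nonempty[OF assms(1,2)] by blast
  moreover have "0 \<le> minx f B"
    using qsetsD[OF \<open>B \<in> qsets n q\<close>] f by (intro minx_nonneg) auto
  ultimately show ?thesis
    using True nonneg by (intro bexI[of _ B]) simp_all
next
  case False
  then obtain B where "B \<in> qsets n q" "B \<subseteq> A" "maxitive_ext q \<eta> A = \<eta> B"
    using maxitive_ext_value[OF assms(1) A] by blast
  moreover have "minx f A \<le> minx f B"
    using qsetsD[OF \<open>B \<in> qsets n q\<close>] \<open>B \<subseteq> A\<close> finite_subset[OF A finite_crit]
    by (intro minx_antimono) auto
  ultimately show ?thesis
    by (intro bexI[of _ B]) auto
qed

lemma sugeno_maxitive_ext:
  assumes "1 \<le> q" "1 \<le> n" and f: "\<And>i. i \<in> crit n \<Longrightarrow> 0 \<le> f i"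
    and nonneg: "\<And>A. A \<in> qsets n q \<Longrightarrow> 0 \<le> \<eta> A"
  shows "sugeno n (maxitive_ext q \<eta>) f = sugeno_qsets n q \<eta> f"
proof -
  let ?term = "\<lambda>\<mu> A. min (minx f A) (\<mu> A)"
  have attained: "\<exists>A\<in>Pow (crit n). ?term \<eta> B \<le> ?term (maxitive_ext q \<eta>) A"
    if "B \<in> qsets n q" for B
    using qsetsD[OF that] by (intro bexI[of _ B]) (simp_all add: maxitive_ext_small)
  have "sugeno n (maxitive_ext q \<eta>) f = Max (?term (maxitive_ext q \<eta>) ` Pow (crit n))"
    unfolding sugeno_def by (rule arg_cong[of _ _ Max]) auto
  also have "\<dots> = Max (?term \<eta> ` qsets n q)"
  proof (rule Max_eq_if)
    show "\<forall>a\<in>?term (maxitive_ext q \<eta>) ` Pow (crit n). \<exists>b\<in>?term \<eta> ` qsets n q. a \<le> b"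
      using sugeno_term_maxitive_ext_le_qsets[OF assms] by simp
    show "\<forall>b\<in>?term \<eta> ` qsets n q. \<exists>a\<in>?term (maxitive_ext q \<eta>) ` Pow (crit n). b \<le> a"
      using attained by simp
  qed (simp_all add: finite_qsets)
  finally show ?thesis
    unfolding sugeno_qsets_def .
qed

lemma sugeno_qsets_ge: "B \<in> qsets n q \<Longrightarrow> min (minx f B) (\<nu> B) \<le> sugeno_qsets n q \<nu> f"
  unfolding sugeno_qsets_def by (simp add: finite_qsets)

lemma sugeno_qsets_attained:
  assumes "qsets n q \<noteq> {}"
  shows "\<exists>B\<in>qsets n q. sugeno_qsets n q \<nu> f = min (minx f B) (\<nu> B)"
proof -
  have "sugeno_qsets n q \<nu> f \<in> (\<lambda>B. min (minx f B) (\<nu> B)) ` qsets n q"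
    unfolding sugeno_qsets_def using assms by (intro Max_in) (simp_all add: finite_qsets)
  then show ?thesis
    by blast
qed

section \<open>\<open>\<Delta>\<^sub>q\<close> is the optimal error\<close>

lemma mustar_eq_maxitive_ext: "mustar n q N x alpha = maxitive_ext q (eta n q N x alpha)"
  by (simp add: fun_eq_iff mustar_def maxitive_ext_def small_subsets_def setcompr_eq_image)

lemma minx_eq_mkA: "B \<noteq> {} \<Longrightarrow> minx (x k) B = mkA x k B"
  by (simp add: minx_def mkA_def)

lemma mkA_antimono: "A \<noteq> {} \<Longrightarrow> A \<subseteq> B \<Longrightarrow> finite B \<Longrightarrow> mkA x k B \<le> mkA x k A"
  unfolding mkA_def by (intro Min_antimono) auto

lemma impG_antimono: "a' \<le> a \<Longrightarrow> b \<le> 1 \<Longrightarrow> impG a b \<le> impG a' b"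
  by (auto simp: impG_def)

lemma deltaA_nonneg: "0 \<le> deltaA N x alpha i A"
  by (simp add: deltaA_def pos_def)

lemma delta_le_deltaA: "A \<in> qsets n q \<Longrightarrow> delta n q N x alpha i \<le> deltaA N x alpha i A"
  unfolding delta_def by (simp add: finite_qsets)

lemma delta_attained:
  assumes "qsets n q \<noteq> {}"
  shows "\<exists>A\<in>qsets n q. delta n q N x alpha i = deltaA N x alpha i A"
proof -
  have "delta n q N x alpha i \<in> deltaA N x alpha i ` qsets n q"
    unfolding delta_def using assms by (intro Min_in) (simp_all add: finite_qsets)
  then show ?thesis
    by blast
qed

lemma delta_le_Delta: "i \<in> {1..N} \<Longrightarrow> delta n q N x alpha i \<le> Delta n q N x alpha"
  unfolding Delta_def by simp

lemma Delta_nonneg: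
  assumes "1 \<le> N" "qsets n q \<noteq> {}"
  shows "0 \<le> Delta n q N x alpha"
proof -
  obtain A where "delta n q N x alpha 1 = deltaA N x alpha 1 A"
    using delta_attained[OF assms(2)] by blast
  then have "0 \<le> delta n q N x alpha 1"
    using deltaA_nonneg by simp
  also have "\<dots> \<le> Delta n q N x alpha"
    using assms(1) by (intro delta_le_Delta) simp
  finally show ?thesis .
qed

lemma eta_le_impG:
  "k \<in> {1..N} \<Longrightarrow> eta n q N x alpha A \<le> impG (mkA x k A) (min (alpha k + Delta n q N x alpha) 1)"
  unfolding eta_def by simp

lemma eta_attained:
  "1 \<le> N \<Longrightarrow>
    \<exists>l\<in>{1..N}. eta n q N x alpha A = impG (mkA x l A) (min (alpha l + Delta n q N x alpha) 1)"
  unfolding eta_def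
  using Min_in[of "(\<lambda>l. impG (mkA x l A) (min (alpha l + Delta n q N x alpha) 1)) ` {1..N}"]
  by fastforce

lemma eta_bounds:
  assumes "1 \<le> N" "0 \<le> Delta n q N x alpha" "\<And>k. k \<in> {1..N} \<Longrightarrow> 0 \<le> alpha k"
  shows "0 \<le> eta n q N x alpha A \<and> eta n q N x alpha A \<le> 1"
proof -
  obtain l where "l \<in> {1..N}"
    "eta n q N x alpha A = impG (mkA x l A) (min (alpha l + Delta n q N x alpha) 1)"
    using eta_attained[OF assms(1)] by blast
  then show ?thesis
    using assms(2) assms(3)[of l] by (auto simp: impG_def)
qed

lemma eta_mono:
  assumes "1 \<le> N" "A \<noteq> {}" "A \<subseteq> B" "finite B"
  shows "eta n q N x alpha A \<le> eta n q N x alpha B"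
proof -
  have "eta n q N x alpha A \<le> impG (mkA x k B) (min (alpha k + Delta n q N x alpha) 1)"
    if "k \<in> {1..N}" for k
  proof -
    have "eta n q N x alpha A \<le> impG (mkA x k A) (min (alpha k + Delta n q N x alpha) 1)"
      using that by (rule eta_le_impG)
    also have "\<dots> \<le> impG (mkA x k B) (min (alpha k + Delta n q N x alpha) 1)"
      using mkA_antimono[OF assms(2-4)] by (rule impG_antimono) simp
    finally show ?thesis .
  qed
  then show ?thesis
    unfolding eta_def[of n q N x alpha B] using assms(1) by (simp add: Min_ge_iff)
qed

lemma min_mkA_eta_le:
  assumes "k \<in> {1..N}"
  shows "min (mkA x k B) (eta n q N x alpha B) \<le> alpha k + Delta n q N x alpha"
proof -
  have "eta n q N x alpha B \<le> impG (mkA x k B) (min (alpha k + Delta n q N x alpha) 1)"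
    using assms by (rule eta_le_impG)
  then show ?thesis
    by (auto simp: impG_def split: if_splits)
qed

lemma eta_ge_of_deltaA_le:
  assumes "1 \<le> N" "k \<in> {1..N}" "alpha k \<le> 1" "0 \<le> Delta n q N x alpha"
    and deltaA: "deltaA N x alpha k A \<le> Delta n q N x alpha"
  shows "alpha k - Delta n q N x alpha \<le> eta n q N x alpha A"
proof -
  let ?D = "Delta n q N x alpha"
  obtain l where l: "l \<in> {1..N}" "eta n q N x alpha A = impG (mkA x l A) (min (alpha l + ?D) 1)"
    using eta_attained[OF assms(1)] by blast
  show ?thesis
  proof (cases "mkA x l A \<le> alpha l + ?D \<or> 1 \<le> alpha l + ?D")
    case True
    then show ?thesis
      using l(2) assms(3,4) by (auto simp: impG_def)
  next
    case False
    have "sigmaG (alpha k) (mkA x l A) (alpha l) \<le> deltaA N x alpha k A"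
      unfolding deltaA_def using l(1) by (simp add: le_max_iff_disj)
    moreover have "?D < pos (mkA x l A - alpha l)"
      using False by (auto simp: pos_def less_max_iff_disj)
    ultimately have "pos (alpha k - alpha l) / 2 \<le> ?D"
      using deltaA by (simp add: sigmaG_def min_le_iff_disj)
    then show ?thesis
      using False l(2) by (auto simp: impG_def pos_def)
  qed
qed

lemma sugeno_qsets_eta_error_le:
  assumes "1 \<le> N" "qsets n q \<noteq> {}" "k \<in> {1..N}" "alpha k \<le> 1"
  shows "\<bar>sugeno_qsets n q (eta n q N x alpha) (x k) - alpha k\<bar> \<le> Delta n q N x alpha"
proof -
  let ?D = "Delta n q N x alpha" and ?S = "sugeno_qsets n q (eta n q N x alpha) (x k)"
  obtain B where B: "B \<in> qsets n q" "?S = min (minx (x k) B) (eta n q N x alpha B)"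
    using sugeno_qsets_attained[OF assms(2)] by blast
  have "?S \<le> alpha k + ?D"
    using B min_mkA_eta_le[OF assms(3)] qsetsD[OF B(1)] by (simp add: minx_eq_mkA)
  moreover obtain A where A: "A \<in> qsets n q" "delta n q N x alpha k = deltaA N x alpha k A"
    using delta_attained[OF assms(2)] by blast
  have deltaA: "deltaA N x alpha k A \<le> ?D"
    using A(2) delta_le_Delta[OF assms(3), of n q x alpha] by simp
  have "alpha k - ?D \<le> mkA x k A"
    using deltaA by (simp add: deltaA_def pos_def)
  moreover have "alpha k - ?D \<le> eta n q N x alpha A"
    using eta_ge_of_deltaA_le[OF assms(1,3,4) Delta_nonneg[OF assms(1,2)] deltaA] .
  moreover have "min (mkA x k A) (eta n q N x alpha A) \<le> ?S"
    using sugeno_qsets_ge[OF A(1), of "x k" "eta n q N x alpha"] qsetsD[OF A(1)]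
    by (simp add: minx_eq_mkA)
  ultimately show ?thesis
    by linarith
qed

lemma sigmaG_le: "0 \<le> \<epsilon> \<Longrightarrow> m \<le> al + \<epsilon> \<or> ai - \<epsilon> \<le> al + \<epsilon> \<Longrightarrow> sigmaG ai m al \<le> \<epsilon>"
  by (auto simp: sigmaG_def pos_def min_def max_def)

lemma delta_le_sugeno_qsets_error:
  assumes "qsets n q \<noteq> {}" "0 \<le> \<epsilon>" "i \<in> {1..N}"
    and err: "\<And>l. l \<in> {1..N} \<Longrightarrow> \<bar>sugeno_qsets n q \<nu> (x l) - alpha l\<bar> \<le> \<epsilon>"
  shows "delta n q N x alpha i \<le> \<epsilon>"
proof -
  obtain A where A: "A \<in> qsets n q" "sugeno_qsets n q \<nu> (x i) = min (mkA x i A) (\<nu> A)"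
    using sugeno_qsets_attained[OF assms(1)] qsetsD minx_eq_mkA by metis
  have lower: "alpha i - \<epsilon> \<le> min (mkA x i A) (\<nu> A)"
    using A(2) err[OF assms(3)] by linarith
  have "sigmaG (alpha i) (mkA x l A) (alpha l) \<le> \<epsilon>" if "l \<in> {1..N}" for l
  proof -
    have "min (mkA x l A) (\<nu> A) \<le> alpha l + \<epsilon>"
      using sugeno_qsets_ge[OF A(1), of "x l" \<nu>] qsetsD[OF A(1)] err[OF that]
      by (simp add: minx_eq_mkA)
    then show ?thesis
      using lower assms(2) by (intro sigmaG_le) auto
  qed
  then have "deltaA N x alpha i A \<le> \<epsilon>"
    using lower assms(2,3) by (auto simp: deltaA_def pos_def)
  then show ?thesis
    using delta_le_deltaA[OF A(1), of N x alpha i] by linarith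
qed

lemma Delta_le_sugeno_qsets_error:
  assumes "1 \<le> N" "qsets n q \<noteq> {}"
  shows "Delta n q N x alpha \<le> Max ((\<lambda>k. \<bar>sugeno_qsets n q \<nu> (x k) - alpha k\<bar>) ` {1..N})"
    (is "_ \<le> ?E")
proof -
  have err: "\<bar>sugeno_qsets n q \<nu> (x l) - alpha l\<bar> \<le> ?E" if "l \<in> {1..N}" for l
    using that by simp
  have "0 \<le> ?E"
    using order.trans[OF abs_ge_zero err[of 1]] assms(1) by simp
  then show ?thesis
    unfolding Delta_def using assms(1) delta_le_sugeno_qsets_error[OF assms(2) \<open>0 \<le> ?E\<close> _ err]
    by (simp add: Max_le_iff)
qed

lemma max_error_sugeno_qsets_eta:
  assumes "1 \<le> N" "qsets n q \<noteq> {}" "\<And>k. k \<in> {1..N} \<Longrightarrow> alpha k \<le> 1"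
  shows "Max ((\<lambda>k. \<bar>sugeno_qsets n q (eta n q N x alpha) (x k) - alpha k\<bar>) ` {1..N})
    = Delta n q N x alpha"
proof (rule order.antisym)
  show "Max ((\<lambda>k. \<bar>sugeno_qsets n q (eta n q N x alpha) (x k) - alpha k\<bar>) ` {1..N})
      \<le> Delta n q N x alpha"
    using assms sugeno_qsets_eta_error_le by simp
qed (rule Delta_le_sugeno_qsets_error[OF assms(1,2)])

theorem proposition3:
  fixes n q N :: nat and x :: "nat \<Rightarrow> nat \<Rightarrow> real" and alpha :: "nat \<Rightarrow> real"
  assumes "1 \<le> N"
    and "\<And>k i. k \<in> {1..N} \<Longrightarrow> i \<in> crit n \<Longrightarrow> 0 \<le> x k i \<and> x k i \<le> 1"
    and "\<And>k. k \<in> {1..N} \<Longrightarrow> 0 \<le> alpha k \<and> alpha k \<le> 1"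
    and "1 \<le> q" and "q \<le> n"
    and "\<exists>A. A \<subseteq> crit n \<and> card A = q \<and> eta n q N x alpha A = 1"
  shows "capacity n (mustar n q N x alpha) \<and> q_maxitive n q (mustar n q N x alpha) \<and>
    Max ((\<lambda>k. \<bar>sugeno n (mustar n q N x alpha) (x k) - alpha k\<bar>) ` {1..N})
      = Delta n q N x alpha"
proof -
  let ?\<eta> = "eta n q N x alpha"
  have qsets: "qsets n q \<noteq> {}"
    using assms(4,5) by (intro qsets_nonempty) auto
  have bounds: "0 \<le> ?\<eta> A \<and> ?\<eta> A \<le> 1" for A
    using assms(1,3) Delta_nonneg[OF assms(1) qsets] by (intro eta_bounds) auto
  have mono: "?\<eta> A \<le> ?\<eta> B" if "A \<in> qsets n q" "B \<in> qsets n q" "A \<subseteq> B" for A B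
    using qsetsD[OF that(1)] qsetsD[OF that(2)] that(3) assms(1) by (intro eta_mono) auto
  have "sugeno n (maxitive_ext q ?\<eta>) (x k) = sugeno_qsets n q ?\<eta> (x k)" if "k \<in> {1..N}" for k
    using assms(2,4,5) that bounds by (intro sugeno_maxitive_ext) auto
  then have "(\<lambda>k. \<bar>sugeno n (maxitive_ext q ?\<eta>) (x k) - alpha k\<bar>) ` {1..N}
      = (\<lambda>k. \<bar>sugeno_qsets n q ?\<eta> (x k) - alpha k\<bar>) ` {1..N}"
    by (intro image_cong) simp_all
  moreover have "Max ((\<lambda>k. \<bar>sugeno_qsets n q ?\<eta> (x k) - alpha k\<bar>) ` {1..N}) = Delta n q N x alpha"
    using assms(3) by (intro max_error_sugeno_qsets_eta[OF assms(1) qsets]) auto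
  ultimately have "Max ((\<lambda>k. \<bar>sugeno n (maxitive_ext q ?\<eta>) (x k) - alpha k\<bar>) ` {1..N})
      = Delta n q N x alpha"
    by simp
  moreover have "capacity n (maxitive_ext q ?\<eta>)"
    using assms(6) bounds mono by (intro capacity_maxitive_ext[OF assms(4)]) auto
  moreover have "q_maxitive n q (maxitive_ext q ?\<eta>)"
    using bounds by (intro q_maxitive_maxitive_ext[OF assms(4)]) auto
  ultimately show ?thesis
    unfolding mustar_eq_maxitive_ext by blast
qed

end
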